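(* Let $X$ be a non-empty set and let $I,\Phi:X\to\mathbb{R}$ and $\mu>0$ be such that the function $I-\mu\Phi$ has a global minimum in $X$. Then at least one of the following assertions holds: (a) for each filtering cover $\mathcal{N}$ of $X$ there exists $A\in\mathcal{N}$ such that $$\sup_{\lambda\in\mathbb{R}}\inf_{x\in A}\big(I(x)-\mu(e^{\Phi(x)-\lambda}+\lambda)\big)<\inf_{x\in A}\sup_{\lambda\in\Phi(A)}\big(I(x)-\mu(e^{\Phi(x)-\lambda}+\lambda)\big);$$ (b) for each global minimum $u$ of $I-\mu\Phi$ one has $$I(u)\leq I(x)-\mu\big(e^{\Phi(x)-\Phi(u)}-1\big)$$ for all $x\in X$.
   Context: A family $\mathcal{N}$ of non-empty subsets of $X$ is a filtering cover of $X$ if $\bigcup_{A\in\mathcal{N}}A=X$ and for each $A_1,A_2\in\mathcal{N}$ there is $A_3\in\mathcal{N}$ with $A_1\cup A_2\subseteq A_3$. *)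

theory Defs
  imports "HOL-Analysis.Analysis"
begin

definition filtering_cover :: "'a set set \<Rightarrow> 'a set \<Rightarrow> bool" where
  "filtering_cover N X \<longleftrightarrow>
     (\<forall>A\<in>N. A \<noteq> {} \<and> A \<subseteq> X) \<and> \<Union>N = X \<and>
     (\<forall>A1\<in>N. \<forall>A2\<in>N. \<exists>A3\<in>N. A1 \<union> A2 \<subseteq> A3)"

definition is_global_min_on :: "'a set \<Rightarrow> ('a \<Rightarrow> real) \<Rightarrow> 'a \<Rightarrow> bool" where
  "is_global_min_on X f u \<longleftrightarrow> u \<in> X \<and> (\<forall>x\<in>X. f u \<le> f x)"

end

theory Submission
  imports Defs
begin

text \<open>
  Let \<open>f y t = I y - \<mu> * (exp (\<Phi> y - t) + t)\<close> and \<open>m = min (I - \<mu> * \<Phi>)\<close>. On the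
  diagonal \<open>f y (\<Phi> y) = (I - \<mu> * \<Phi>) y - \<mu> \<ge> m - \<mu>\<close>, so the right-hand side of (a)
  is at least \<open>m - \<mu>\<close> for every \<open>A\<close>. If (b) fails at a minimum \<open>u\<close> and a point \<open>x\<close>,
  then \<open>f x (\<Phi> u) < m - \<mu>\<close>, while \<open>f u t = m - \<mu> - \<mu> * (exp s - 1 - s)\<close> with
  \<open>s = \<Phi> u - t\<close> is below \<open>m - \<mu>\<close> by a uniform margin away from \<open>t = \<Phi> u\<close>. So
  \<open>min (f u t) (f x t)\<close> stays uniformly below \<open>m - \<mu>\<close>, and any member of the filtering
  cover containing both \<open>u\<close> and \<open>x\<close> satisfies (a).
\<close>

lemma exp_minus_one_minus_ge_min:
  fixes s e :: real
  assumes "e > 0" "\<bar>s\<bar> \<ge> e"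
  shows "exp s - 1 - s \<ge> min (exp e - 1 - e) (exp (-e) - 1 + e)"
proof (cases "s \<ge> 0")
  case True
  hence "s \<ge> e" using assms by simp
  have "exp s = exp e * exp (s - e)" by (simp flip: exp_add)
  also have "\<dots> \<ge> exp e * (1 + (s - e))" by (intro mult_left_mono) auto
  finally have "exp s - 1 - s \<ge> (exp e - 1 - e) + (s - e) * (exp e - 1)"
    by (simp add: algebra_simps)
  moreover have "(s - e) * (exp e - 1) \<ge> 0"
    using \<open>s \<ge> e\<close> exp_gt_one[OF assms(1)] by simp
  ultimately show ?thesis by linarith
next
  case False
  hence "s \<le> -e" using assms by simp
  have "exp s = exp (-e) * exp (s + e)" by (simp flip: exp_add)
  also have "\<dots> \<ge> exp (-e) * (1 + (s + e))" by (intro mult_left_mono) auto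
  finally have "exp s - 1 - s \<ge> (exp (-e) - 1 + e) + (s + e) * (exp (-e) - 1)"
    by (simp add: algebra_simps)
  moreover have "(s + e) * (exp (-e) - 1) \<ge> 0"
    using \<open>s \<le> -e\<close> assms(1) by (intro mult_nonpos_nonpos) auto
  ultimately show ?thesis by linarith
qed

lemma exp_minus_one_minus_uniformly_pos:
  fixes e :: real
  assumes "e > 0"
  obtains c where "c > 0" "\<And>s. \<bar>s\<bar> \<ge> e \<Longrightarrow> exp s - 1 - s \<ge> c"
proof
  show "min (exp e - 1 - e) (exp (-e) - 1 + e) > 0"
    using exp_minus_greater[of e] exp_minus_greater[of "-e"] assms by auto
qed (use exp_minus_one_minus_ge_min assms in blast)

lemma min_with_exp_gap_uniformly_below:
  fixes \<phi> :: "real \<Rightarrow> real"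
  assumes "isCont \<phi> a" "\<phi> a < c" "\<kappa> > 0"
  obtains \<eta> where "\<eta> > 0"
    "\<And>t. min (c - \<kappa> * (exp (a - t) - 1 - (a - t))) (\<phi> t) \<le> c - \<eta>"
proof -
  define \<delta> where "\<delta> = c - \<phi> a"
  have "\<delta> > 0" using assms(2) unfolding \<delta>_def by simp
  then obtain e where "e > 0" and near: "\<And>t. \<bar>t - a\<bar> < e \<Longrightarrow> \<bar>\<phi> t - \<phi> a\<bar> < \<delta> / 2"
    using assms(1) unfolding continuous_at_eps_delta dist_real_def by (meson half_gt_zero)
  obtain k where "k > 0" and far: "\<And>s. \<bar>s\<bar> \<ge> e \<Longrightarrow> exp s - 1 - s \<ge> k"
    using exp_minus_one_minus_uniformly_pos[OF \<open>e > 0\<close>] by blast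
  show ?thesis
  proof
    show "min (\<delta> / 2) (\<kappa> * k) > 0" using \<open>\<delta> > 0\<close> \<open>k > 0\<close> assms(3) by simp
  next
    fix t
    show "min (c - \<kappa> * (exp (a - t) - 1 - (a - t))) (\<phi> t) \<le> c - min (\<delta> / 2) (\<kappa> * k)"
    proof (cases "\<bar>t - a\<bar> < e")
      case True
      then have "\<bar>\<phi> t - \<phi> a\<bar> < \<delta> / 2" by (rule near)
      then have "\<phi> t - \<phi> a < \<delta> / 2" by (rule le_less_trans[OF abs_ge_self])
      then have "\<phi> t < c - \<delta> / 2" unfolding \<delta>_def by (simp add: field_simps)
      then show ?thesis
        by (intro min.coboundedI2) (use min.cobounded1[of "\<delta> / 2" "\<kappa> * k"] in linarith)
    next
      case False
      then have "\<kappa> * k \<le> \<kappa> * (exp (a - t) - 1 - (a - t))"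
        using far[of "a - t"] assms(3) by (intro mult_left_mono) auto
      then show ?thesis
        by (intro min.coboundedI1) (use min.cobounded2[of "\<delta> / 2" "\<kappa> * k"] in linarith)
    qed
  qed
qed

lemma ereal_le_INF_SUP_diagonal:
  assumes "\<And>y. y \<in> A \<Longrightarrow> c \<le> F y (g y)"
  shows "ereal c \<le> (INF y\<in>A. SUP t\<in>g ` A. ereal (F y t))"
proof (rule INF_greatest)
  fix y assume "y \<in> A"
  then have "ereal c \<le> ereal (F y (g y))" using assms by simp
  also have "\<dots> \<le> (SUP t\<in>g ` A. ereal (F y t))" using \<open>y \<in> A\<close> by (intro SUP_upper) auto
  finally show "ereal c \<le> (SUP t\<in>g ` A. ereal (F y t))" .
qed

lemma SUP_INF_ereal_le_pair:
  assumes "u \<in> A" "x \<in> A" "\<And>t. min (F u t) (F x t) \<le> c"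
  shows "(SUP t. INF y\<in>A. ereal (F y t)) \<le> ereal c"
proof (rule SUP_least)
  fix t
  have "(INF y\<in>A. ereal (F y t)) \<le> ereal (min (F u t) (F x t))"
    using assms(1,2) by (simp add: INF_lower2 min_def)
  also have "\<dots> \<le> ereal c" by (simp only: ereal_less_eq) (rule assms(3))
  finally show "(INF y\<in>A. ereal (F y t)) \<le> ereal c" .
qed

lemma minimax_gap_of_violating_pair:
  fixes I \<Phi> :: "'a \<Rightarrow> real" and \<mu> :: real
  assumes "\<mu> > 0" "u \<in> A" "x \<in> A"
    and min_u: "\<And>y. y \<in> A \<Longrightarrow> I u - \<mu> * \<Phi> u \<le> I y - \<mu> * \<Phi> y"
    and violates: "I u > I x - \<mu> * (exp (\<Phi> x - \<Phi> u) - 1)"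
  shows "(SUP t::real. INF y\<in>A. ereal (I y - \<mu> * (exp (\<Phi> y - t) + t)))
           < (INF y\<in>A. SUP t\<in>\<Phi> ` A. ereal (I y - \<mu> * (exp (\<Phi> y - t) + t)))"
proof -
  define f where "f y t = I y - \<mu> * (exp (\<Phi> y - t) + t)" for y t
  define c where "c = I u - \<mu> * \<Phi> u - \<mu>"
  have f_u: "f u t = c - \<mu> * (exp (\<Phi> u - t) - 1 - (\<Phi> u - t))" for t
    unfolding f_def c_def by (simp add: algebra_simps)
  have "isCont (f x) (\<Phi> u)" unfolding f_def by (intro continuous_intros)
  moreover have "f x (\<Phi> u) < c" using violates unfolding f_def c_def by (simp add: algebra_simps)
  ultimately obtain \<eta> where "\<eta> > 0" and below: "\<And>t. min (f u t) (f x t) \<le> c - \<eta>"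
    using min_with_exp_gap_uniformly_below[where \<phi> = "f x" and a = "\<Phi> u" and c = c and \<kappa> = \<mu>]
      assms(1) f_u by metis
  have "(SUP t. INF y\<in>A. ereal (f y t)) \<le> ereal (c - \<eta>)"
    using SUP_INF_ereal_le_pair[OF assms(2,3) below] .
  also have "\<dots> < ereal c" using \<open>\<eta> > 0\<close> by simp
  also have "ereal c \<le> (INF y\<in>A. SUP t\<in>\<Phi> ` A. ereal (f y t))"
    using min_u by (intro ereal_le_INF_SUP_diagonal) (simp add: f_def c_def algebra_simps)
  finally show ?thesis unfolding f_def .
qed

lemma filtering_cover_obtains_common_member:
  assumes "filtering_cover N X" "x \<in> X" "u \<in> X"
  obtains A where "A \<in> N" "A \<subseteq> X" "x \<in> A" "u \<in> A"
proof -
  obtain A1 A2 where "A1 \<in> N" "x \<in> A1" "A2 \<in> N" "u \<in> A2"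
    using assms unfolding filtering_cover_def by blast
  then obtain A where "A \<in> N" "A1 \<union> A2 \<subseteq> A"
    using assms(1) unfolding filtering_cover_def by meson
  then show ?thesis
    using that assms(1) \<open>x \<in> A1\<close> \<open>u \<in> A2\<close> unfolding filtering_cover_def by blast
qed

theorem theorem3p6:
  fixes X :: "'a set" and I \<Phi> :: "'a \<Rightarrow> real" and \<mu> :: real
  assumes "X \<noteq> {}" and "\<mu> > 0"
    and "\<exists>u. is_global_min_on X (\<lambda>x. I x - \<mu> * \<Phi> x) u"
  shows "(\<forall>N. filtering_cover N X \<longrightarrow>
            (\<exists>A\<in>N.
               (SUP t::real. INF x\<in>A. ereal (I x - \<mu> * (exp (\<Phi> x - t) + t)))
               < (INF x\<in>A. SUP t\<in>\<Phi> ` A. ereal (I x - \<mu> * (exp (\<Phi> x - t) + t)))))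
         \<or> (\<forall>u. is_global_min_on X (\<lambda>x. I x - \<mu> * \<Phi> x) u \<longrightarrow>
              (\<forall>x\<in>X. I u \<le> I x - \<mu> * (exp (\<Phi> x - \<Phi> u) - 1)))"
proof (rule disjCI)
  assume "\<not> (\<forall>u. is_global_min_on X (\<lambda>x. I x - \<mu> * \<Phi> x) u \<longrightarrow>
              (\<forall>x\<in>X. I u \<le> I x - \<mu> * (exp (\<Phi> x - \<Phi> u) - 1)))"
  then obtain u x where u: "is_global_min_on X (\<lambda>x. I x - \<mu> * \<Phi> x) u" and "x \<in> X"
    and violates: "I u > I x - \<mu> * (exp (\<Phi> x - \<Phi> u) - 1)" by force
  show "\<forall>N. filtering_cover N X \<longrightarrow>
          (\<exists>A\<in>N. (SUP t::real. INF x\<in>A. ereal (I x - \<mu> * (exp (\<Phi> x - t) + t)))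
                  < (INF x\<in>A. SUP t\<in>\<Phi> ` A. ereal (I x - \<mu> * (exp (\<Phi> x - t) + t))))"
  proof (intro allI impI)
    fix N assume "filtering_cover N X"
    then obtain A where "A \<in> N" "A \<subseteq> X" "x \<in> A" "u \<in> A"
      using filtering_cover_obtains_common_member \<open>x \<in> X\<close> u
      unfolding is_global_min_on_def by metis
    moreover have "\<And>y. y \<in> A \<Longrightarrow> I u - \<mu> * \<Phi> u \<le> I y - \<mu> * \<Phi> y"
      using u \<open>A \<subseteq> X\<close> unfolding is_global_min_on_def by auto
    ultimately show "\<exists>A\<in>N. (SUP t::real. INF x\<in>A. ereal (I x - \<mu> * (exp (\<Phi> x - t) + t)))
                  < (INF x\<in>A. SUP t\<in>\<Phi> ` A. ereal (I x - \<mu> * (exp (\<Phi> x - t) + t)))"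
      using minimax_gap_of_violating_pair[OF \<open>\<mu> > 0\<close> _ _ _ violates] by blast
  qed
qed

end
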